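(* Let $S:\overline{\mathcal{D}}\to\widehat{\mathbb{C}}$ be a weak B-involution with $\mathcal{D}=\bigsqcup_{i=1}^k\Omega_i$, and let $\mathcal{G}$ be its welding graph. Then there is an edge between $v_{i_1}^-$ and $v_{i_2}^+$ if and only if there is an edge between $v_{i_1}^+$ and $v_{i_2}^-$.
   Context: $\Omega_1,\dots,\Omega_k$ are pairwise disjoint finitely connected proper subdomains of $\widehat{\mathbb{C}}$ with $\mathrm{int}(\overline{\Omega_i})=\Omega_i$; $X\subset\partial\mathcal{D}$ is finite and $\partial^0\mathcal{D}=\partial\mathcal{D}\setminus X$ is a finite union of disjoint non-singular real-analytic curves; $S$ is continuous on $\overline{\mathcal{D}}$, meromorphic on $\mathcal{D}$, maps $\partial\mathcal{D}$ to itself and $X$ to itself with $S\circ S=\mathrm{id}$ on $\partial\mathcal{D}$, and is orientation-reversing on $\partial^0\mathcal{D}$ (a weak B-involution). Put $\partial^0\Omega_i=\partial^0\mathcal{D}\cap\overline{\Omega_i}$. The welding graph $\mathcal{G}$ has vertices $v_1^\pm,\dots,v_k^\pm$, and $v_{i_1}^-$, $v_{i_2}^+$ are joined by an edge iff $S(\partial^0\Omega_{i_1})\cap\partial^0\Omega_{i_2}\neq\emptyset$ (these are the only edges). *)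

theory Defs
  imports "HOL-Complex_Analysis.Complex_Analysis"
begin

text \<open>The Riemann sphere is modelled as \<open>complex option\<close>, with \<open>None\<close> the point at
  infinity.  Its topology is the one transported from the unit sphere in R^3 via inverse
  stereographic projection (an injective map), i.e. the usual topology of the Riemann sphere.\<close>

definition stereo :: "complex option \<Rightarrow> real \<times> real \<times> real" where
  "stereo p = (case p of None \<Rightarrow> (0, 0, 1)
     | Some z \<Rightarrow> (2 * Re z / (1 + (cmod z)^2), 2 * Im z / (1 + (cmod z)^2),
                 ((cmod z)^2 - 1) / ((cmod z)^2 + 1)))"

definition RS :: "complex option topology" where
  "RS = pullback_topology UNIV stereo euclidean"

definition rs_inv :: "complex \<Rightarrow> complex option" where
  "rs_inv w = (if w = 0 then None else Some (inverse w))"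

definition rs_charts :: "(complex \<Rightarrow> complex option) set" where
  "rs_charts = {Some, rs_inv}"

definition rs_domain :: "complex option set \<Rightarrow> bool" where
  "rs_domain U \<longleftrightarrow> openin RS U \<and> connectedin RS U \<and> U \<noteq> {}"

definition proper_finitely_connected_domain :: "complex option set \<Rightarrow> bool" where
  "proper_finitely_connected_domain U \<longleftrightarrow>
     rs_domain U \<and> U \<noteq> UNIV \<and>
     finite (connected_components_of (subtopology RS (UNIV - U)))"

definition nonsing_analytic_at :: "(real \<Rightarrow> complex option) \<Rightarrow> real \<Rightarrow> bool" where
  "nonsing_analytic_at \<gamma> t \<longleftrightarrow>
     (\<exists>r>0. \<exists>g. \<exists>\<phi>\<in>rs_charts. g holomorphic_on ball (complex_of_real t) r \<and>
        (\<forall>z\<in>ball (complex_of_real t) r. deriv g z \<noteq> 0) \<and>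
        (\<forall>s. \<bar>s - t\<bar> < r \<longrightarrow> \<gamma> s = \<phi> (g (complex_of_real s))))"

definition nonsing_analytic_curve :: "complex option set \<Rightarrow> bool" where
  "nonsing_analytic_curve C \<longleftrightarrow>
     (\<exists>\<gamma> a b. a < b \<and> C = \<gamma> ` {a<..<b} \<and>
        homeomorphic_map (top_of_set {a<..<b}) (subtopology RS C) \<gamma> \<and>
        (\<forall>t\<in>{a<..<b}. nonsing_analytic_at \<gamma> t))
   \<or> (\<exists>\<gamma>. (\<forall>t. \<gamma> (t + 1) = \<gamma> t) \<and> inj_on \<gamma> {0..<1} \<and> C = \<gamma> ` {0..1} \<and>
        (\<forall>t. nonsing_analytic_at \<gamma> t))"

definition dom_union :: "nat \<Rightarrow> (nat \<Rightarrow> complex option set) \<Rightarrow> complex option set" where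
  "dom_union k \<Omega> = (\<Union>i\<in>{1..k}. \<Omega> i)"

definition bdry0 :: "nat \<Rightarrow> (nat \<Rightarrow> complex option set) \<Rightarrow> complex option set \<Rightarrow> complex option set" where
  "bdry0 k \<Omega> X = RS frontier_of (dom_union k \<Omega>) - X"

definition bdry0_comp :: "nat \<Rightarrow> (nat \<Rightarrow> complex option set) \<Rightarrow> complex option set \<Rightarrow> nat \<Rightarrow> complex option set" where
  "bdry0_comp k \<Omega> X i = bdry0 k \<Omega> X \<inter> RS closure_of (\<Omega> i)"

definition standing_setup :: "nat \<Rightarrow> (nat \<Rightarrow> complex option set) \<Rightarrow> complex option set \<Rightarrow> bool" where
  "standing_setup k \<Omega> X \<longleftrightarrow>
     (\<forall>i\<in>{1..k}. proper_finitely_connected_domain (\<Omega> i) \<and>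
                 RS interior_of (RS closure_of (\<Omega> i)) = \<Omega> i) \<and>
     (\<forall>i\<in>{1..k}. \<forall>j\<in>{1..k}. i \<noteq> j \<longrightarrow> \<Omega> i \<inter> \<Omega> j = {}) \<and>
     finite X \<and> X \<subseteq> RS frontier_of (dom_union k \<Omega>) \<and>
     (\<exists>\<C>. finite \<C> \<and> (\<forall>C\<in>\<C>. nonsing_analytic_curve C) \<and>
          pairwise disjnt \<C> \<and> \<Union>\<C> = bdry0 k \<Omega> X)"

definition meromorphic_on_RS :: "(complex option \<Rightarrow> complex option) \<Rightarrow> complex option set \<Rightarrow> bool" where
  "meromorphic_on_RS S U \<longleftrightarrow>
     (\<forall>p\<in>U. \<exists>\<phi>\<in>rs_charts. \<exists>\<psi>\<in>rs_charts. \<exists>w0 r h.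
        r > 0 \<and> \<phi> w0 = p \<and> \<phi> ` ball w0 r \<subseteq> U \<and> h holomorphic_on ball w0 r \<and>
        (\<forall>w\<in>ball w0 r. S (\<phi> w) = \<psi> (h w))) \<and>
     (\<forall>C\<in>connected_components_of (subtopology RS U). \<exists>z\<in>C. S z \<noteq> None)"

text \<open>A positively oriented (domain on the left) non-singular real-analytic
  parametrization of a relatively open arc of the boundary of \<open>D\<close>.\<close>
definition pos_bdry_param :: "complex option set \<Rightarrow> (real \<Rightarrow> complex option) \<Rightarrow> real \<Rightarrow> real \<Rightarrow> bool" where
  "pos_bdry_param D \<gamma> a b \<longleftrightarrow>
     a < b \<and> inj_on \<gamma> {a<..<b} \<and> \<gamma> ` {a<..<b} \<subseteq> RS frontier_of D \<and>
     openin (subtopology RS (RS frontier_of D)) (\<gamma> ` {a<..<b}) \<and>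
     (\<forall>t\<in>{a<..<b}. \<exists>r>0. \<exists>g. \<exists>\<phi>\<in>rs_charts. g holomorphic_on ball (complex_of_real t) r \<and>
        (\<forall>z\<in>ball (complex_of_real t) r. deriv g z \<noteq> 0) \<and>
        (\<forall>s. \<bar>s - t\<bar> < r \<longrightarrow> \<gamma> s = \<phi> (g (complex_of_real s))) \<and>
        (\<exists>\<delta>>0. \<forall>\<epsilon>. 0 < \<epsilon> \<and> \<epsilon> < \<delta> \<longrightarrow>
            \<phi> (g (complex_of_real t) + \<i> * complex_of_real \<epsilon> * deriv g (complex_of_real t)) \<in> D))"

text \<open>\<open>S\<close> reverses the boundary orientation on \<open>B \<subseteq> \<partial>D\<close>: read in positively oriented
  local parametrizations, \<open>S\<close> is strictly decreasing.\<close>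
definition orientation_reversing_on :: "(complex option \<Rightarrow> complex option) \<Rightarrow> complex option set \<Rightarrow> complex option set \<Rightarrow> bool" where
  "orientation_reversing_on S D B \<longleftrightarrow>
     (\<forall>\<gamma> a b t0. pos_bdry_param D \<gamma> a b \<and> \<gamma> ` {a<..<b} \<subseteq> B \<and> t0 \<in> {a<..<b} \<longrightarrow>
        (\<exists>\<eta> c d \<delta>. pos_bdry_param D \<eta> c d \<and> \<eta> ` {c<..<d} \<subseteq> B \<and> \<delta> > 0 \<and>
           {t0 - \<delta><..<t0 + \<delta>} \<subseteq> {a<..<b} \<and>
           (\<forall>t\<in>{t0 - \<delta><..<t0 + \<delta>}. S (\<gamma> t) \<in> \<eta> ` {c<..<d}) \<and>
           (\<forall>t1\<in>{t0 - \<delta><..<t0 + \<delta>}. \<forall>t2\<in>{t0 - \<delta><..<t0 + \<delta>}. t1 < t2 \<longrightarrow>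
               inv_into {c<..<d} \<eta> (S (\<gamma> t2)) < inv_into {c<..<d} \<eta> (S (\<gamma> t1)))))"

definition weak_B_involution ::
  "nat \<Rightarrow> (nat \<Rightarrow> complex option set) \<Rightarrow> complex option set \<Rightarrow> (complex option \<Rightarrow> complex option) \<Rightarrow> bool" where
  "weak_B_involution k \<Omega> X S \<longleftrightarrow>
     (let D = dom_union k \<Omega>; dD = RS frontier_of D in
      continuous_map (subtopology RS (RS closure_of D)) RS S \<and>
      meromorphic_on_RS S D \<and>
      S ` dD \<subseteq> dD \<and> S ` X \<subseteq> X \<and> (\<forall>z\<in>dD. S (S z) = z) \<and>
      orientation_reversing_on S D (bdry0 k \<Omega> X))"

datatype wvertex = VMinus nat | VPlus nat

text \<open>Edges of the welding graph: \<open>v_{i1}^-\<close> and \<open>v_{i2}^+\<close> are joined iff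
  \<open>S(\<partial>\<^sup>0\<Omega>_{i1}) \<inter> \<partial>\<^sup>0\<Omega>_{i2} \<noteq> {}\<close>; edges are undirected (two-element sets).\<close>
definition welding_edges ::
  "nat \<Rightarrow> (nat \<Rightarrow> complex option set) \<Rightarrow> complex option set \<Rightarrow> (complex option \<Rightarrow> complex option) \<Rightarrow> wvertex set set" where
  "welding_edges k \<Omega> X S =
     {{VMinus i1, VPlus i2} | i1 i2. i1 \<in> {1..k} \<and> i2 \<in> {1..k} \<and>
        S ` bdry0_comp k \<Omega> X i1 \<inter> bdry0_comp k \<Omega> X i2 \<noteq> {}}"

end

theory Submission
  imports Defs
begin

lemma involution_image_meets_commute:
  assumes "\<forall>z\<in>A. f (f z) = z" and "B \<subseteq> A" and "C \<subseteq> A"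
  shows "f ` B \<inter> C \<noteq> {} \<longleftrightarrow> f ` C \<inter> B \<noteq> {}"
proof -
  have meets: "f ` P \<inter> Q \<noteq> {}" if "f ` Q \<inter> P \<noteq> {}" "Q \<subseteq> A" for P Q
  proof -
    from that obtain z where "z \<in> Q" "f z \<in> P" by blast
    moreover have "f (f z) = z" using \<open>z \<in> Q\<close> \<open>Q \<subseteq> A\<close> assms(1) by blast
    ultimately have "z \<in> f ` P \<inter> Q" by (metis IntI image_eqI)
    then show ?thesis by blast
  qed
  show ?thesis using meets assms(2,3) by blast
qed

lemma bdry0_comp_subset_frontier: "bdry0_comp k \<Omega> X i \<subseteq> RS frontier_of (dom_union k \<Omega>)"
  unfolding bdry0_comp_def bdry0_def by blast

lemma weak_B_involution_involutive:
  "weak_B_involution k \<Omega> X S \<Longrightarrow> \<forall>z\<in>RS frontier_of (dom_union k \<Omega>). S (S z) = z"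
  unfolding weak_B_involution_def Let_def by blast

lemma welding_edges_iff:
  "{VMinus a, VPlus b} \<in> welding_edges k \<Omega> X S \<longleftrightarrow>
    a \<in> {1..k} \<and> b \<in> {1..k} \<and> S ` bdry0_comp k \<Omega> X a \<inter> bdry0_comp k \<Omega> X b \<noteq> {}"
  unfolding welding_edges_def by (auto simp: doubleton_eq_iff)

theorem lemma4p11:
  fixes k :: nat and \<Omega> :: "nat \<Rightarrow> complex option set" and X :: "complex option set"
    and S :: "complex option \<Rightarrow> complex option" and i1 i2 :: nat
  assumes "standing_setup k \<Omega> X"
    and "weak_B_involution k \<Omega> X S"
    and "i1 \<in> {1..k}" and "i2 \<in> {1..k}"
  shows "{VMinus i1, VPlus i2} \<in> welding_edges k \<Omega> X S \<longleftrightarrow>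
         {VPlus i1, VMinus i2} \<in> welding_edges k \<Omega> X S"
proof -
  have "{VPlus i1, VMinus i2} = {VMinus i2, VPlus i1}" by blast
  then show ?thesis
    using involution_image_meets_commute[OF weak_B_involution_involutive[OF assms(2)]
        bdry0_comp_subset_frontier[of k \<Omega> X i1] bdry0_comp_subset_frontier[of k \<Omega> X i2]]
    by (simp add: welding_edges_iff conj_ac)
qed

end
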